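(* For tasks $m=1,\ldots,T$, let $L(w_{m0},\bm{w}_m)$ be a differentiable loss (the negative log-likelihood of a generalized linear model with intercept $w_{m0}\in\mathbb{R}$ and coefficient vector $\bm{w}_m\in\mathbb{R}^p$ fitted to data of size $n_m$). Let $\mathcal{E}$ be a set of task pairs with weights $r_{m_1,m_2}\ge0$, let $\lambda_1>0$, $\lambda_2,\lambda_3\ge0$, $\gamma$ be fixed, and let $P(\cdot;\lambda,\gamma)$ be a (possibly non-convex) group penalty with associated group-thresholding function $\bm{\Theta}(\cdot;\lambda,\gamma)$; set $\bm{\psi}(\bm{o};\lambda,\gamma)=\bm{o}-\bm{\Theta}(\bm{o};\lambda,\gamma)$. Define $$L^{\mathrm{MR}}(\bm{w}_0,W,U,O)=\sum_{m=1}^T\frac{1}{n_m}L(w_{m0},\bm{w}_m)+\frac{\lambda_1}{2}\sum_{m=1}^T\|\bm{w}_m-\bm{u}_m-\bm{o}_m\|_2^2+\lambda_2\sum_{(m_1,m_2)\in\mathcal{E}}r_{m_1,m_2}\|\bm{u}_{m_1}-\bm{u}_{m_2}\|_2+\sum_{m=1}^T P(\bm{o}_m;\lambda_3,\gamma),$$ with $\bm w_0=(w_{10},\dots,w_{T0})^\top$, $W=(\bm{w}_1,\ldots,\bm{w}_T)^\top$, $U=(\bm{u}_1,\ldots,\bm{u}_T)^\top$, $O=(\bm{o}_1,\ldots,\bm{o}_T)^\top$. Suppose $(\widehat{\bm{w}}_0,\widehat W,\widehat U,\widehat O)$ is a convergence (fixed) point of the block coordinate descent scheme that cyclically minimizes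 $L^{\mathrm{MR}}$ over $(\bm{w}_0,W)$, then over $U$, then updates $O$; precisely, assume (i) for each $m$, $(\widehat w_{m0},\widehat{\bm{w}}_m)\in\arg\min_{w_{m0},\bm{w}_m}\{\frac1{n_m}L(w_{m0},\bm{w}_m)+\frac{\lambda_1}{2}\|\bm{w}_m-\widehat{\bm{u}}_m-\widehat{\bm{o}}_m\|_2^2\}$; (ii) $\widehat U\in\arg\min_U L^{\mathrm{MR}}(\widehat{\bm{w}}_0,\widehat W,U,\widehat O)$; (iii) $\widehat{\bm{o}}_m=\bm{\Theta}(\widehat{\bm{w}}_m-\widehat{\bm{u}}_m;\lambda_3/\lambda_1,\gamma)$ for each $m$. Then, writing $\bm{w}_m'=(w_{m0},\bm{w}_m^\top)^\top$, $$\nabla_{\bm{w}_m'}\Big(\frac{1}{n_m}L(w_{m0},\bm{w}_m)\Big)\Big|_{\bm{w}_m'=\widehat{\bm{w}}_m'}+\lambda_1\begin{pmatrix}0\\ \bm{\psi}(\widehat{\bm{w}}_m-\widehat{\bm{u}}_m;\lambda_3/\lambda_1,\gamma)\end{pmatrix}=\bm{0},\quad m=1,\ldots,T,$$ and $$\bm{0}\in-\lambda_1\Psi(\widehat W-\widehat U;\lambda_3/\lambda_1,\gamma)+\lambda_2\,\partial g(\widehat U),$$ where $g(U)=\sum_{(m_1,m_2)\in\mathcal{E}}r_{m_1,m_2}\|\bm{u}_{m_1}-\bm{u}_{m_2}\|_2$ as a function of $\mathrm{vec}(U)=(\bm{u}_1^\top,\ldots,\bm{u}_T^\top)^\top$,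 $\partial g$ is its convex subdifferential, and $\Psi(\widehat W-\widehat U;\lambda,\gamma)=(\bm{\psi}(\widehat{\bm{w}}_1-\widehat{\bm{u}}_1;\lambda,\gamma)^\top,\ldots,\bm{\psi}(\widehat{\bm{w}}_T-\widehat{\bm{u}}_T;\lambda,\gamma)^\top)^\top$.
   Context: The group-thresholding function associated with the penalty $P$ is the map $\bm{\Theta}(\bm{z};\lambda,\gamma)$ giving the minimizer of $\tfrac12\|\bm{z}-\bm{o}\|_2^2+P(\bm{o};\lambda,\gamma)$ over $\bm{o}\in\mathbb{R}^p$ (e.g. for group lasso $\bm\Theta(\bm z;\lambda)=\max(0,1-\lambda/\|\bm z\|_2)\bm z$). The function $g$ equals $\|D\,\mathrm{vec}(U)\|_{2,1}$ with $D=A_r\otimes I_p$, $A_r$ the $|\mathcal{E}|\times T$ matrix whose row for $(m_1,m_2)$ is $r_{m_1,m_2}$ times the vector with $+1$ at $m_1$, $-1$ at $m_2$, zeros elsewhere, and $\|\cdot\|_{2,1}$ the sum of Euclidean norms of consecutive length-$p$ blocks. *)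

theory Defs
  imports "HOL-Analysis.Analysis"
begin

text \<open>Tasks are indexed by a finite type 'm (T = CARD('m)), coordinates by a finite type 'p.
  Row m of W, U, O is W $ m etc.; the intercepts form w0 :: real^'m.\<close>

definition is_thresholding ::
  "(real^'p \<Rightarrow> real \<Rightarrow> real \<Rightarrow> real) \<Rightarrow> (real^'p \<Rightarrow> real \<Rightarrow> real \<Rightarrow> real^'p) \<Rightarrow> real \<Rightarrow> bool" where
  "is_thresholding P Theta gamma \<longleftrightarrow>
     (\<forall>z lam v. lam \<ge> 0 \<longrightarrow>
        (1/2) * (norm (z - Theta z lam gamma))\<^sup>2 + P (Theta z lam gamma) lam gamma
          \<le> (1/2) * (norm (z - v))\<^sup>2 + P v lam gamma)"

definition psi :: "(real^'p \<Rightarrow> real \<Rightarrow> real \<Rightarrow> real^'p) \<Rightarrow> real^'p \<Rightarrow> real \<Rightarrow> real \<Rightarrow> real^'p" where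
  "psi Theta v lam gamma = v - Theta v lam gamma"

definition Psi :: "(real^'p \<Rightarrow> real \<Rightarrow> real \<Rightarrow> real^'p) \<Rightarrow> real^'p^'m \<Rightarrow> real \<Rightarrow> real \<Rightarrow> real^'p^'m" where
  "Psi Theta V lam gamma = (\<chi> m. psi Theta (V $ m) lam gamma)"

definition gfun :: "('m \<times> 'm) set \<Rightarrow> ('m \<Rightarrow> 'm \<Rightarrow> real) \<Rightarrow> real^'p^'m \<Rightarrow> real" where
  "gfun E r U = (\<Sum>(m1, m2)\<in>E. r m1 m2 * norm (U $ m1 - U $ m2))"

text \<open>Convex subdifferential (inner product on real^'p^'m is that of vec(U)).\<close>
definition subdiff :: "('a::real_inner \<Rightarrow> real) \<Rightarrow> 'a \<Rightarrow> 'a set" where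
  "subdiff f x = {s. \<forall>y. f y \<ge> f x + inner s (y - x)}"

definition LMR ::
  "('m \<Rightarrow> real \<Rightarrow> real^'p \<Rightarrow> real) \<Rightarrow> ('m \<Rightarrow> nat) \<Rightarrow> ('m \<times> 'm) set \<Rightarrow> ('m \<Rightarrow> 'm \<Rightarrow> real)
   \<Rightarrow> (real^'p \<Rightarrow> real \<Rightarrow> real \<Rightarrow> real) \<Rightarrow> real \<Rightarrow> real \<Rightarrow> real \<Rightarrow> real
   \<Rightarrow> real^'m \<Rightarrow> real^'p^'m \<Rightarrow> real^'p^'m \<Rightarrow> real^'p^'m \<Rightarrow> real" where
  "LMR L n E r P lam1 lam2 lam3 gamma w0 W U Om =
     (\<Sum>m\<in>UNIV. L m (w0 $ m) (W $ m) / real (n m))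
     + lam1 / 2 * (\<Sum>m\<in>UNIV. (norm (W $ m - U $ m - Om $ m))\<^sup>2)
     + lam2 * (\<Sum>(m1, m2)\<in>E. r m1 m2 * norm (U $ m1 - U $ m2))
     + (\<Sum>m\<in>UNIV. P (Om $ m) lam3 gamma)"

end

theory Submission
  imports Defs
begin

text \<open>Both conclusions are first-order optimality conditions of the blocks of the fixed point.
  The intercept/coefficient block minimises a differentiable function plus
  \<open>\<lambda>\<^sub>1/2 \<parallel>w\<^sub>m - u\<^sub>m - o\<^sub>m\<parallel>\<^sup>2\<close>, so its gradient vanishes, and by (iii)
  \<open>w\<^sub>m - u\<^sub>m - o\<^sub>m\<close> is exactly \<open>\<psi>(w\<^sub>m - u\<^sub>m)\<close>. In \<open>U\<close> the objective is the proximal problem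
  \<open>\<lambda>\<^sub>1/2 \<parallel>W - O - U\<parallel>\<^sup>2 + \<lambda>\<^sub>2 g(U)\<close> with \<open>g\<close> convex; comparing the minimum with the
  values along a segment and letting the step shrink gives
  \<open>\<lambda>\<^sub>1 (W - O - U) \<in> \<partial>(\<lambda>\<^sub>2 g)(U)\<close>, and \<open>W - O - U = \<Psi>\<close>. For \<open>\<lambda>\<^sub>2 = 0\<close> this forces
  \<open>\<Psi> = 0\<close>, and any subgradient of \<open>g\<close> (one is built from \<open>sgn\<close>) does.\<close>

lemma le_zero_if_le_small_multiples:
  fixes c K :: real
  assumes "\<And>t. 0 < t \<Longrightarrow> t \<le> 1 \<Longrightarrow> c \<le> t * K"
  shows "c \<le> 0"
proof -
  have "((\<lambda>t. t * K) \<longlongrightarrow> 0 * K) (at_right 0)"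
    by (intro tendsto_intros)
  moreover have "\<forall>\<^sub>F t in at_right 0. c \<le> t * K"
    unfolding eventually_at_right_field by (auto intro!: exI[of _ 1] assms)
  ultimately show ?thesis
    by (intro tendsto_lowerbound[of _ _ "at_right 0"]) auto
qed

lemma sgn_in_subdiff_norm: "sgn x \<in> subdiff norm (x :: 'a::real_inner)"
proof (cases "x = 0")
  case False
  have "norm x * inner x y \<le> norm x * (norm x * norm y)" for y
    by (intro mult_left_mono norm_cauchy_schwarz) simp
  then show ?thesis
    using False by (simp add: subdiff_def sgn_div_norm inner_diff_right field_simps
        flip: power2_norm_eq_inner power2_eq_square)
qed (simp add: subdiff_def)

lemma subdiff_compose_linear:
  assumes "s \<in> subdiff f (h x)" "linear h" "\<And>v. inner s (h v) = inner s' v"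
  shows "s' \<in> subdiff (\<lambda>x. f (h x)) x"
  using assms by (simp add: subdiff_def linear_diff flip: assms(3))

lemma subdiff_cmult:
  assumes "s \<in> subdiff f x" "c \<ge> 0"
  shows "c *\<^sub>R s \<in> subdiff (\<lambda>x. c * f x) x"
proof -
  have "c * f x + c * inner s (y - x) \<le> c * f y" for y
    using assms mult_left_mono[of "f x + inner s (y - x)" "f y" c]
    by (simp add: subdiff_def distrib_left)
  then show ?thesis by (simp add: subdiff_def)
qed

lemma subdiff_sum:
  assumes "finite I" "\<And>i. i \<in> I \<Longrightarrow> s i \<in> subdiff (f i) x"
  shows "(\<Sum>i\<in>I. s i) \<in> subdiff (\<lambda>x. \<Sum>i\<in>I. f i x) x"
proof -
  have "(\<Sum>i\<in>I. f i x + inner (s i) (y - x)) \<le> (\<Sum>i\<in>I. f i y)" for y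
    using assms(2) by (intro sum_mono) (simp add: subdiff_def)
  then show ?thesis
    by (simp add: subdiff_def sum.distrib inner_sum_left)
qed

lemma subgradient_of_scaled:
  assumes "s \<in> subdiff (\<lambda>y. c * f y) x" "c \<ge> 0" "subdiff f x \<noteq> {}"
  shows "\<exists>s'\<in>subdiff f x. s = c *\<^sub>R s'"
proof (cases "c = 0")
  case True
  have "inner s s \<le> 0"
    using assms(1) True by (auto simp: subdiff_def dest: spec[of _ "x + s"])
  then have "s = 0"
    by (metis inner_gt_zero_iff not_le)
  then show ?thesis using True assms(3) by auto
next
  case False
  then have "(1 / c) *\<^sub>R s \<in> subdiff f x"
    using subdiff_cmult[OF assms(1), of "1 / c"] assms(2) by (simp add: subdiff_def)
  then show ?thesis using False by (intro bexI[of _ "(1 / c) *\<^sub>R s"]) auto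
qed

lemma convex_on_norm_linear:
  assumes "linear h"
  shows "convex_on UNIV (\<lambda>x. norm (h x))"
proof (rule convex_onI)
  fix t :: real and x y
  assume t: "0 < t" "t < 1"
  have "norm (h ((1 - t) *\<^sub>R x + t *\<^sub>R y)) = norm ((1 - t) *\<^sub>R h x + t *\<^sub>R h y)"
    by (simp add: linear_add[OF assms] linear_scale[OF assms])
  also have "\<dots> \<le> (1 - t) * norm (h x) + t * norm (h y)"
    using t by (smt (verit) norm_scaleR norm_triangle_ineq)
  finally show "norm (h ((1 - t) *\<^sub>R x + t *\<^sub>R y)) \<le> (1 - t) * norm (h x) + t * norm (h y)" .
qed simp

lemma convex_on_sum_fun:
  assumes "convex S" "\<And>i. i \<in> I \<Longrightarrow> convex_on S (f i)"
  shows "convex_on S (\<lambda>x. \<Sum>i\<in>I. f i x)"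
  using assms(2)
proof (induction I rule: infinite_finite_induct)
  case (insert i I)
  then show ?case by (simp add: convex_on_add)
qed (simp_all add: convex_on_const assms(1))

lemma prox_minimizer_subgradient:
  fixes g :: "'a::real_inner \<Rightarrow> real"
  assumes g: "convex_on UNIV g"
    and min: "\<And>y. a / 2 * (norm (z - x))\<^sup>2 + g x \<le> a / 2 * (norm (z - y))\<^sup>2 + g y"
  shows "a *\<^sub>R (z - x) \<in> subdiff g x"
  unfolding subdiff_def
proof clarify
  fix y
  define d where "d = y - x"
  have "a * inner (z - x) d - (g y - g x) \<le> 0"
  proof (rule le_zero_if_le_small_multiples)
    fix t :: real assume t: "0 < t" "t \<le> 1"
    have "a / 2 * (norm (z - x))\<^sup>2 + g x \<le> a / 2 * (norm (z - x - t *\<^sub>R d))\<^sup>2 + g (x + t *\<^sub>R d)"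
      using min[of "x + t *\<^sub>R d"] by (simp add: algebra_simps)
    also have "g (x + t *\<^sub>R d) \<le> (1 - t) * g x + t * g y"
      using convex_onD[OF g, of t x y] t by (simp add: d_def algebra_simps)
    also have "(norm (z - x - t *\<^sub>R d))\<^sup>2 = (norm (z - x))\<^sup>2 - 2 * t * inner (z - x) d + t\<^sup>2 * (norm d)\<^sup>2"
      unfolding power2_norm_eq_inner
      by (simp add: inner_diff_left inner_diff_right inner_commute power2_eq_square algebra_simps)
    finally have "t * (a * inner (z - x) d - (g y - g x)) \<le> t * (t * (a / 2 * (norm d)\<^sup>2))"
      by (simp add: algebra_simps power2_eq_square)
    then show "a * inner (z - x) d - (g y - g x) \<le> t * (a / 2 * (norm d)\<^sup>2)"
      using t by simp
  qed
  then show "g x + inner (a *\<^sub>R (z - x)) (y - x) \<le> g y"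
    by (simp add: d_def)
qed

lemma GDERIV_of_minimum_of_sum:
  assumes "f differentiable (at x)" "GDERIV g x :> G"
    and min: "\<And>y. f x + g x \<le> f y + g y"
  shows "GDERIV f x :> - G"
proof -
  obtain D where D: "(f has_derivative D) (at x)"
    using assms(1) unfolding differentiable_def by blast
  have "((\<lambda>y. f y + g y) has_derivative (\<lambda>h. D h + inner h G)) (at x)"
    using D assms(2) unfolding gderiv_def by (rule has_derivative_add)
  then have "(\<lambda>h. D h + inner h G) = (\<lambda>h. 0)"
    by (rule has_derivative_local_min) (simp add: min always_eventually)
  then have "D = (\<lambda>h. inner h (- G))"
    by (simp add: fun_eq_iff eq_neg_iff_add_eq_0)
  then show ?thesis using D by (simp add: gderiv_def)
qed

lemma GDERIV_half_sq_dist_snd: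
  fixes c :: "'b::real_inner"
  shows "GDERIV (\<lambda>x :: 'a::real_inner \<times> 'b. a / 2 * (norm (snd x - c))\<^sup>2) x :> a *\<^sub>R (0, snd x - c)"
  unfolding gderiv_def power2_norm_eq_inner
  by (auto intro!: derivative_eq_intros simp: fun_eq_iff inner_prod_def inner_commute algebra_simps)

lemma stationary_point_of_block_minimum:
  fixes f :: "'a::real_inner \<times> 'b::real_inner \<Rightarrow> real"
  assumes "f differentiable (at x)"
    and "\<And>y. f x + a / 2 * (norm (snd x - c))\<^sup>2 \<le> f y + a / 2 * (norm (snd y - c))\<^sup>2"
  shows "\<exists>G. GDERIV f x :> G \<and> G + a *\<^sub>R (0, snd x - c) = 0"
  using GDERIV_of_minimum_of_sum[OF assms(1) GDERIV_half_sq_dist_snd assms(2)] add.left_inverse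
  by blast

lemma linear_vec_nth_diff: "linear (\<lambda>U :: 'a::real_vector^'m::finite. U $ a - U $ b)"
  by (intro linearI) (simp_all add: algebra_simps)

lemma inner_vec_nth_diff:
  fixes U :: "'a::real_inner^'m::finite"
  shows "inner d (U $ a - U $ b) = inner (\<chi> m. (if m = a then d else 0) - (if m = b then d else 0)) U"
  by (simp add: inner_vec_def inner_diff_left inner_diff_right sum_subtractf
      if_distrib[of "\<lambda>v. inner v _"] cong: if_cong)

lemma convex_gfun:
  assumes "\<And>a b. (a, b) \<in> E \<Longrightarrow> r a b \<ge> 0"
  shows "convex_on UNIV (gfun E r :: real^'p^'m::finite \<Rightarrow> real)"
  unfolding gfun_def case_prod_unfold
proof (rule convex_on_sum_fun)
  fix e assume "e \<in> E"
  then show "convex_on UNIV (\<lambda>U :: real^'p^'m. r (fst e) (snd e) * norm (U $ fst e - U $ snd e))"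
    using assms[of "fst e" "snd e"] \<open>e \<in> E\<close> by (intro convex_on_cmul convex_on_norm_linear linear_vec_nth_diff) auto
qed simp

lemma subdiff_gfun_nonempty:
  assumes "\<And>a b. (a, b) \<in> E \<Longrightarrow> r a b \<ge> 0"
  shows "subdiff (gfun E r) (U :: real^'p^'m::finite) \<noteq> {}"
proof -
  define s where "s = (\<lambda>(a, b). r a b *\<^sub>R
    (\<chi> m. (if m = a then sgn (U $ a - U $ b) else 0) - (if m = b then sgn (U $ a - U $ b) else 0)))"
  have "s e \<in> subdiff (\<lambda>U. case e of (a, b) \<Rightarrow> r a b * norm (U $ a - U $ b)) U" if "e \<in> E" for e
  proof (cases e)
    case (Pair a b)
    then show ?thesis
      using that assms[of a b] unfolding s_def
      by (auto intro!: subdiff_cmult subdiff_compose_linear[OF sgn_in_subdiff_norm]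
          linear_vec_nth_diff inner_vec_nth_diff)
  qed
  then have "(\<Sum>e\<in>E. s e) \<in> subdiff (gfun E r) U"
    unfolding gfun_def by (intro subdiff_sum) auto
  then show ?thesis by blast
qed

lemma LMR_in_U:
  "LMR L n E r P lam1 lam2 lam3 gamma w0 W U Om
     = (\<Sum>m\<in>UNIV. L m (w0 $ m) (W $ m) / real (n m)) + (\<Sum>m\<in>UNIV. P (Om $ m) lam3 gamma)
       + (lam1 / 2 * (norm (W - Om - U))\<^sup>2 + lam2 * gfun E r U)"
proof -
  have "(norm (W - Om - U))\<^sup>2 = (\<Sum>m\<in>UNIV. (norm (W $ m - U $ m - Om $ m))\<^sup>2)"
    by (simp add: norm_vec_def L2_set_def sum_nonneg algebra_simps)
  then show ?thesis
    by (simp add: LMR_def gfun_def)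
qed

theorem proposition2:
  fixes L :: "'m::finite \<Rightarrow> real \<Rightarrow> real^'p \<Rightarrow> real"
    and n :: "'m \<Rightarrow> nat"
    and E :: "('m \<times> 'm) set"
    and r :: "'m \<Rightarrow> 'm \<Rightarrow> real"
    and P :: "real^'p \<Rightarrow> real \<Rightarrow> real \<Rightarrow> real"
    and Theta :: "real^'p \<Rightarrow> real \<Rightarrow> real \<Rightarrow> real^'p"
    and lam1 lam2 lam3 gamma :: real
    and w0h :: "real^'m"
    and Wh Uh Oh :: "real^'p^'m"
  assumes n_pos: "\<And>m. n m > 0"
    and L_diff: "\<And>m x. (\<lambda>x'. L m (fst x') (snd x')) differentiable (at x)"
    and r_nonneg: "\<And>m1 m2. (m1, m2) \<in> E \<Longrightarrow> r m1 m2 \<ge> 0"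
    and lam1_pos: "lam1 > 0" and lam2_nonneg: "lam2 \<ge> 0" and lam3_nonneg: "lam3 \<ge> 0"
    and Theta_assoc: "is_thresholding P Theta gamma"
    and fix_W: "\<And>m a w. L m (w0h $ m) (Wh $ m) / real (n m)
                   + lam1 / 2 * (norm (Wh $ m - Uh $ m - Oh $ m))\<^sup>2
                 \<le> L m a w / real (n m) + lam1 / 2 * (norm (w - Uh $ m - Oh $ m))\<^sup>2"
    and fix_U: "\<And>U. LMR L n E r P lam1 lam2 lam3 gamma w0h Wh Uh Oh
                    \<le> LMR L n E r P lam1 lam2 lam3 gamma w0h Wh U Oh"
    and fix_O: "\<And>m. Oh $ m = Theta (Wh $ m - Uh $ m) (lam3 / lam1) gamma"
  shows "(\<forall>m. \<exists>G. GDERIV (\<lambda>x'. L m (fst x') (snd x') / real (n m)) (w0h $ m, Wh $ m) :> G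
              \<and> G + lam1 *\<^sub>R (0, psi Theta (Wh $ m - Uh $ m) (lam3 / lam1) gamma) = 0)
       \<and> (\<exists>s\<in>subdiff (gfun E r) Uh.
              0 = - (lam1 *\<^sub>R Psi Theta (Wh - Uh) (lam3 / lam1) gamma) + lam2 *\<^sub>R s)"
proof
  show "\<forall>m. \<exists>G. GDERIV (\<lambda>x'. L m (fst x') (snd x') / real (n m)) (w0h $ m, Wh $ m) :> G
              \<and> G + lam1 *\<^sub>R (0, psi Theta (Wh $ m - Uh $ m) (lam3 / lam1) gamma) = 0"
  proof
    fix m
    have "psi Theta (Wh $ m - Uh $ m) (lam3 / lam1) gamma = snd (w0h $ m, Wh $ m) - (Uh $ m + Oh $ m)"
      by (simp add: psi_def fix_O)
    moreover have "\<exists>G. GDERIV (\<lambda>x'. L m (fst x') (snd x') / real (n m)) (w0h $ m, Wh $ m) :> G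
              \<and> G + lam1 *\<^sub>R (0, snd (w0h $ m, Wh $ m) - (Uh $ m + Oh $ m)) = 0"
    proof (rule stationary_point_of_block_minimum)
      show "(\<lambda>x'. L m (fst x') (snd x') / real (n m)) differentiable (at (w0h $ m, Wh $ m))"
        using L_diff n_pos[of m] by (intro differentiable_divide differentiable_const) auto
      show "L m (fst (w0h $ m, Wh $ m)) (snd (w0h $ m, Wh $ m)) / real (n m)
              + lam1 / 2 * (norm (snd (w0h $ m, Wh $ m) - (Uh $ m + Oh $ m)))\<^sup>2
            \<le> L m (fst y) (snd y) / real (n m) + lam1 / 2 * (norm (snd y - (Uh $ m + Oh $ m)))\<^sup>2" for y
        using fix_W[of m "fst y" "snd y"] by (simp add: diff_diff_eq)
    qed
    ultimately show "\<exists>G. GDERIV (\<lambda>x'. L m (fst x') (snd x') / real (n m)) (w0h $ m, Wh $ m) :> G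
              \<and> G + lam1 *\<^sub>R (0, psi Theta (Wh $ m - Uh $ m) (lam3 / lam1) gamma) = 0"
      by (simp only:)
  qed
next
  have Psi_eq: "Psi Theta (Wh - Uh) (lam3 / lam1) gamma = Wh - Oh - Uh"
    by (simp add: Psi_def vec_eq_iff psi_def fix_O)
  have min: "lam1 / 2 * (norm (Wh - Oh - Uh))\<^sup>2 + lam2 * gfun E r Uh
          \<le> lam1 / 2 * (norm (Wh - Oh - U))\<^sup>2 + lam2 * gfun E r U" for U
    using fix_U[of U] by (simp only: LMR_in_U add_le_cancel_left)
  have conv: "convex_on UNIV (\<lambda>U. lam2 * gfun E r U)"
    by (rule convex_on_cmul[OF lam2_nonneg convex_gfun]) (rule r_nonneg)
  from conv min have "lam1 *\<^sub>R (Wh - Oh - Uh) \<in> subdiff (\<lambda>U. lam2 * gfun E r U) Uh"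
    by (rule prox_minimizer_subgradient)
  then obtain s where "s \<in> subdiff (gfun E r) Uh" "lam1 *\<^sub>R (Wh - Oh - Uh) = lam2 *\<^sub>R s"
    using subgradient_of_scaled lam2_nonneg subdiff_gfun_nonempty[of E r, OF r_nonneg] by metis
  then show "\<exists>s\<in>subdiff (gfun E r) Uh.
              0 = - (lam1 *\<^sub>R Psi Theta (Wh - Uh) (lam3 / lam1) gamma) + lam2 *\<^sub>R s"
    by (auto simp: Psi_eq)
qed

end
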